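(* Let $A\in\mathbb{C}^{n\times n}$, and fix $A^-\in A\{1\}$ and $A^{GD}\in A\{GD\}$. For $X\in\mathbb{C}^{n\times n}$ the following are equivalent: (i) $X = A^{-}AA^{GD}$; (ii) $AX = AA^{GD}$ and $R(X)=R(A^{-}A)$; (iii) $A^{GD}AX = A^{GD}AA^{GD}$ and $R(X)=R(A^{-}A)$.
   Context: For $A\in\mathbb{C}^{n\times n}$, $ind(A)$ is the smallest nonnegative integer $k$ with $\mathrm{rank}(A^k)=\mathrm{rank}(A^{k+1})$. $A\{1\}$ is the set of matrices $X$ with $AXA=A$. With $k=ind(A)$, $A\{GD\}$ is the set of G-Drazin inverses of $A$: matrices $X$ with $AXA=A$, $XA^{k+1}=A^k$, $A^{k+1}X=A^k$. $R(\cdot)$ denotes range. The matrix $A^-AA^{GD}$ is called the 1GD inverse of $A$ associated with $A^-$ and $A^{GD}$. *)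

theory Defs
  imports "HOL-Analysis.Analysis"
begin

primrec matpow :: "'a::semiring_1^'n^'n \<Rightarrow> nat \<Rightarrow> 'a^'n^'n" where
  "matpow A 0 = mat 1"
| "matpow A (Suc k) = A ** matpow A k"

definition ind :: "'a::field^'n^'n \<Rightarrow> nat" where
  "ind A = (LEAST k. rank (matpow A k) = rank (matpow A (Suc k)))"

definition inner_inverses :: "'a::field^'n^'n \<Rightarrow> ('a^'n^'n) set" where
  "inner_inverses A = {X. A ** X ** A = A}"

definition gdrazin_inverses :: "'a::field^'n^'n \<Rightarrow> ('a^'n^'n) set" where
  "gdrazin_inverses A = {X. A ** X ** A = A
      \<and> X ** matpow A (Suc (ind A)) = matpow A (ind A)
      \<and> matpow A (Suc (ind A)) ** X = matpow A (ind A)}"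

definition mrange :: "'a::semiring_1^'n^'m \<Rightarrow> ('a^'m) set" where
  "mrange X = range (\<lambda>v. X *v v)"

end

theory Submission
  imports Defs
begin

text \<open>Since \<open>A A\<^sup>- A = A\<close>, the matrix \<open>P = A\<^sup>- A\<close> is idempotent and hence acts as the
  identity on its own range; so \<open>R(X) = R(P)\<close> and \<open>A X = A A\<^sup>G\<^sup>D\<close> give
  \<open>X = P X = A\<^sup>- A A\<^sup>G\<^sup>D\<close>. Conversely \<open>R(P A\<^sup>G\<^sup>D) = R(P)\<close> because \<open>P A\<^sup>G\<^sup>D A = P\<close>.
  Condition (iii) is equivalent to (ii) because \<open>A\<^sup>G\<^sup>D A\<close> can be cancelled on the left,
  again by \<open>A A\<^sup>G\<^sup>D A = A\<close>.\<close>

lemma mrange_matrix_mul_subset: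
  fixes B :: "'a::semiring_1^'k^'m" and C :: "'a^'n^'k"
  shows "mrange (B ** C) \<subseteq> mrange B"
  unfolding mrange_def by (auto simp: matrix_vector_mul_assoc[symmetric])

lemma mrange_matrix_mul_eq:
  fixes B :: "'a::semiring_1^'k^'m" and C :: "'a^'n^'k" and D :: "'a^'k^'n"
  assumes "B ** C ** D = B"
  shows "mrange (B ** C) = mrange B"
proof
  show "mrange (B ** C) \<subseteq> mrange B"
    by (rule mrange_matrix_mul_subset)
  show "mrange B \<subseteq> mrange (B ** C)"
  proof
    fix y assume "y \<in> mrange B"
    then obtain v where "y = B *v v" unfolding mrange_def by auto
    then have "y = (B ** C) *v (D *v v)"
      using assms by (simp add: matrix_vector_mul_assoc)
    then show "y \<in> mrange (B ** C)" unfolding mrange_def by auto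
  qed
qed

lemma idempotent_matrix_mul_eq_if_mrange_subset:
  fixes P :: "'a::semiring_1^'m^'m" and X :: "'a^'n^'m"
  assumes "P ** P = P" and "mrange X \<subseteq> mrange P"
  shows "P ** X = X"
proof -
  have "P *v (X *v v) = X *v v" for v
  proof -
    obtain w where w: "X *v v = P *v w"
      using assms(2) unfolding mrange_def by auto
    then show ?thesis using assms(1) by (simp add: matrix_vector_mul_assoc)
  qed
  then show ?thesis by (simp add: matrix_eq matrix_vector_mul_assoc)
qed

lemma inner_inverse_left_cancel:
  fixes A :: "'a::semiring_1^'n^'m" and G :: "'a^'m^'n" and X Y :: "'a^'k^'n"
  assumes "A ** G ** A = A"
  shows "G ** A ** X = G ** A ** Y \<longleftrightarrow> A ** X = A ** Y"
proof
  assume "G ** A ** X = G ** A ** Y"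
  then have "A ** (G ** A ** X) = A ** (G ** A ** Y)" by simp
  then show "A ** X = A ** Y" using assms by (simp add: matrix_mul_assoc)
qed (simp add: matrix_mul_assoc[symmetric])

theorem theorem3p5:
  fixes A Am Agd X :: "complex^'n^'n"
  assumes "Am \<in> inner_inverses A"
    and "Agd \<in> gdrazin_inverses A"
  shows "(X = Am ** A ** Agd
            \<longleftrightarrow> (A ** X = A ** Agd \<and> mrange X = mrange (Am ** A)))
       \<and> (X = Am ** A ** Agd
            \<longleftrightarrow> (Agd ** A ** X = Agd ** A ** Agd \<and> mrange X = mrange (Am ** A)))"
proof -
  have AmA: "A ** Am ** A = A" using assms(1) by (simp add: inner_inverses_def)
  have AGA: "A ** Agd ** A = A" using assms(2) by (simp add: gdrazin_inverses_def)
  have idem: "(Am ** A) ** (Am ** A) = Am ** A"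
    using AmA by (metis matrix_mul_assoc)
  have range: "mrange (Am ** A ** Agd) = mrange (Am ** A)"
    using AGA by (intro mrange_matrix_mul_eq[where D = A]) (metis matrix_mul_assoc)
  have "X = Am ** A ** Agd \<longleftrightarrow> A ** X = A ** Agd \<and> mrange X = mrange (Am ** A)"
  proof
    assume "X = Am ** A ** Agd"
    then show "A ** X = A ** Agd \<and> mrange X = mrange (Am ** A)"
      using AmA range by (simp add: matrix_mul_assoc)
  next
    assume ii: "A ** X = A ** Agd \<and> mrange X = mrange (Am ** A)"
    then have "X = Am ** A ** X"
      using idempotent_matrix_mul_eq_if_mrange_subset[OF idem] by (metis order_refl)
    with ii show "X = Am ** A ** Agd" by (metis matrix_mul_assoc)
  qed
  then show ?thesis using inner_inverse_left_cancel[OF AGA] by blast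
qed

end
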